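(* Let $P=(\mathbb C^2\setminus\{0\})/\mathbb Z$ be the Hopf surface, the quotient by the $\mathbb Z$-action generated by $z\mapsto 2z$, with the complex structure $J$ induced from $\mathbb C^2$. Then $H^1_J(P)=0$. In particular, since $H^1_{dR}(P)\cong\mathbb R$, the natural map $H^1_J(P)\to H^1_{dR}(P)$ is not an isomorphism.
   Context: For a vector-valued $k$-form $K=K^je_j$ on $M$, $\iota_K\alpha=K^j\wedge(\iota_{e_j}\alpha)$ and $\mathcal L_K=\iota_K\mathrm d-(-1)^{k-1}\mathrm d\iota_K$. For an almost complex structure $J$, $\mathcal L_J$ has degree $1$ and anticommutes with $\mathrm d$, so $\mathrm d$ preserves $(\ker\mathcal L_J)^k=\{\alpha\in\Omega^k(M):\mathcal L_J\alpha=0\}$ (real forms); the $J$-cohomology $H^k_J(M)$ is the $k$-th cohomology of $((\ker\mathcal L_J)^\bullet,\mathrm d)$, and the natural map to de Rham cohomology is induced by inclusion. *)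

theory Defs
  imports "HOL-Analysis.Analysis"
begin

text \<open>Differential forms on P are identified with forms on U = C^2 - {0} invariant under
  pull-back by the generator h z = 2 z.  A 0-form is a function U -> real, a 1-form is a
  map z -> (linear functional on tangent vectors), a 2-form is a map z -> (bilinear alternating
  functional); only the values on U matter.\<close>

type_synonym pt = "complex \<times> complex"

definition U :: "pt set" where "U = - {0}"

definition hopf_gen :: "pt \<Rightarrow> pt" where "hopf_gen z = (2::real) *\<^sub>R z"

fun Ck_on :: "nat \<Rightarrow> pt set \<Rightarrow> (pt \<Rightarrow> real) \<Rightarrow> bool" where
  "Ck_on 0 S f = continuous_on S f"
| "Ck_on (Suc n) S f = (f differentiable_on S \<and>
      (\<forall>v. Ck_on n S (\<lambda>x. frechet_derivative f (at x) v)))"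

definition smooth_on :: "pt set \<Rightarrow> (pt \<Rightarrow> real) \<Rightarrow> bool" where
  "smooth_on S f = (\<forall>n. Ck_on n S f)"

definition Jc :: "pt \<Rightarrow> pt" where "Jc v = (\<i> * fst v, \<i> * snd v)"

definition form0 :: "(pt \<Rightarrow> real) \<Rightarrow> bool" where
  "form0 f \<longleftrightarrow> smooth_on U f \<and> (\<forall>z\<in>U. f (hopf_gen z) = f z)"

definition form1 :: "(pt \<Rightarrow> pt \<Rightarrow> real) \<Rightarrow> bool" where
  "form1 \<alpha> \<longleftrightarrow> (\<forall>z\<in>U. linear (\<alpha> z)) \<and> (\<forall>v. smooth_on U (\<lambda>z. \<alpha> z v))
     \<and> (\<forall>z\<in>U. \<forall>v. \<alpha> (hopf_gen z) ((2::real) *\<^sub>R v) = \<alpha> z v)"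

definition d0 :: "(pt \<Rightarrow> real) \<Rightarrow> pt \<Rightarrow> pt \<Rightarrow> real" where
  "d0 f z v = frechet_derivative f (at z) v"

definition d1 :: "(pt \<Rightarrow> pt \<Rightarrow> real) \<Rightarrow> pt \<Rightarrow> pt \<Rightarrow> pt \<Rightarrow> real" where
  "d1 \<alpha> z v w = frechet_derivative (\<lambda>y. \<alpha> y w) (at z) v
                - frechet_derivative (\<lambda>y. \<alpha> y v) (at z) w"

text \<open>Insertion iota_J (J a vector-valued 1-form): zero on 0-forms,
  alpha o J on 1-forms, and (iota_J omega)(v,w) = omega(Jv,w) + omega(v,Jw) on 2-forms
  (this is J^j wedge iota_{e_j} omega).\<close>
definition iJ1 :: "(pt \<Rightarrow> pt \<Rightarrow> real) \<Rightarrow> pt \<Rightarrow> pt \<Rightarrow> real" where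
  "iJ1 \<alpha> z v = \<alpha> z (Jc v)"

definition iJ2 :: "(pt \<Rightarrow> pt \<Rightarrow> pt \<Rightarrow> real) \<Rightarrow> pt \<Rightarrow> pt \<Rightarrow> pt \<Rightarrow> real" where
  "iJ2 \<omega> z v w = \<omega> z (Jc v) w + \<omega> z v (Jc w)"

text \<open>L_J = iota_J d - (-1)^(1-1) d iota_J = iota_J d - d iota_J.
  On 0-forms iota_J f = 0, so L_J f = iota_J (d f).\<close>
definition LJ0 :: "(pt \<Rightarrow> real) \<Rightarrow> pt \<Rightarrow> pt \<Rightarrow> real" where
  "LJ0 f = iJ1 (d0 f)"

definition LJ1 :: "(pt \<Rightarrow> pt \<Rightarrow> real) \<Rightarrow> pt \<Rightarrow> pt \<Rightarrow> pt \<Rightarrow> real" where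
  "LJ1 \<alpha> z v w = iJ2 (d1 \<alpha>) z v w - d1 (iJ1 \<alpha>) z v w"

definition kerLJ0 :: "(pt \<Rightarrow> real) set" where
  "kerLJ0 = {f. form0 f \<and> (\<forall>z\<in>U. \<forall>v. LJ0 f z v = 0)}"

definition kerLJ1 :: "(pt \<Rightarrow> pt \<Rightarrow> real) set" where
  "kerLJ1 = {\<alpha>. form1 \<alpha> \<and> (\<forall>z\<in>U. \<forall>v w. LJ1 \<alpha> z v w = 0)}"

definition closed1 :: "(pt \<Rightarrow> pt \<Rightarrow> real) \<Rightarrow> bool" where
  "closed1 \<alpha> \<longleftrightarrow> (\<forall>z\<in>U. \<forall>v w. d1 \<alpha> z v w = 0)"

definition H1J_trivial :: bool where
  "H1J_trivial \<longleftrightarrow> (\<forall>\<alpha>\<in>kerLJ1. closed1 \<alpha> \<longrightarrow> (\<exists>f\<in>kerLJ0. \<forall>z\<in>U. d0 f z = \<alpha> z))"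

definition H1dR_nontrivial :: bool where
  "H1dR_nontrivial \<longleftrightarrow> (\<exists>\<alpha>. form1 \<alpha> \<and> closed1 \<alpha> \<and> \<not> (\<exists>f. form0 f \<and> (\<forall>z\<in>U. d0 f z = \<alpha> z)))"

end

theory Submission
  imports Defs "HOL-Complex_Analysis.Cauchy_Integral_Formula"
begin

text \<open>If \<open>\<alpha>\<close> is closed and \<open>L\<^sub>J \<alpha> = 0\<close>, then \<open>\<alpha> \<circ> J\<close> is closed as well, so on every complex line
  \<open>z + \<complex> e\<close> missing the origin the function \<open>\<alpha>(e) - i \<alpha>(J e)\<close> satisfies the Cauchy--Riemann
  equations and is entire. Invariance under \<open>z \<mapsto> 2 z\<close> makes \<open>|\<alpha>\<^sub>z| |z|\<close> bounded, so this entire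
  function tends to \<open>0\<close> at infinity and vanishes by Liouville's theorem; thus \<open>\<alpha> = 0\<close> and
  \<open>H\<^sup>1\<^sub>J(P) = 0\<close>. On the other hand \<open>d log |z|\<close> is closed and invariant, but has no invariant
  primitive because \<open>log |2 z| = log |z| + log 2\<close>.\<close>

lemma open_U: "open U"
  by (simp add: U_def open_Compl)

lemma mem_U_iff: "z \<in> U \<longleftrightarrow> z \<noteq> 0"
  by (simp add: U_def)

lemma smooth_on_imp_continuous_on: "smooth_on S f \<Longrightarrow> continuous_on S f"
  unfolding smooth_on_def by (metis Ck_on.simps(1))

lemma smooth_on_imp_has_derivative:
  assumes "smooth_on S f" "open S" "z \<in> S"
  shows "(f has_derivative frechet_derivative f (at z)) (at z)"
proof -
  have "f differentiable_on S"
    using assms(1) unfolding smooth_on_def by (metis Ck_on.simps(2))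
  then have "f differentiable at z"
    using assms(2,3) by (simp add: differentiable_on_eq_differentiable_at)
  then show ?thesis
    by (simp add: frechet_derivative_works[symmetric])
qed

lemma Ck_on_cong:
  assumes "open S" "\<forall>x\<in>S. f x = g x" "Ck_on n S f"
  shows "Ck_on n S g"
  using assms
proof (induction n arbitrary: f g)
  case 0
  then show ?case
    using continuous_on_eq by auto
next
  case (Suc n)
  have f_diff: "f differentiable_on S"
    and f_deriv: "\<And>v. Ck_on n S (\<lambda>x. frechet_derivative f (at x) v)"
    using Suc.prems(3) unfolding Ck_on.simps by blast+
  have g_deriv: "(g has_derivative frechet_derivative f (at x)) (at x)" if "x \<in> S" for x
  proof (rule has_derivative_transform_within_open[OF _ Suc.prems(1) that])
    show "(f has_derivative frechet_derivative f (at x)) (at x)"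
      using f_diff that Suc.prems(1)
      by (simp add: differentiable_on_eq_differentiable_at frechet_derivative_works[symmetric])
  qed (use Suc.prems(2) in auto)
  then have "g differentiable_on S"
    using Suc.prems(1) differentiable_def differentiable_on_eq_differentiable_at by blast
  moreover have "Ck_on n S (\<lambda>x. frechet_derivative g (at x) v)" for v
    by (rule Suc.IH[OF Suc.prems(1) _ f_deriv[of v]]) (simp add: frechet_derivative_at[OF g_deriv])
  ultimately show ?case
    by simp
qed

inductive_set inner_rational :: "(pt \<Rightarrow> real) set" where
  const: "(\<lambda>z. c) \<in> inner_rational"
| inner: "(\<lambda>z. z \<bullet> b) \<in> inner_rational"
| inverse_norm2: "(\<lambda>z. inverse (z \<bullet> z)) \<in> inner_rational"
| add: "f \<in> inner_rational \<Longrightarrow> g \<in> inner_rational \<Longrightarrow> (\<lambda>z. f z + g z) \<in> inner_rational"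
| mult: "f \<in> inner_rational \<Longrightarrow> g \<in> inner_rational \<Longrightarrow> (\<lambda>z. f z * g z) \<in> inner_rational"

lemma inner_rational_has_derivative:
  "f \<in> inner_rational \<Longrightarrow>
    \<exists>f'. (\<forall>z\<in>U. (f has_derivative f' z) (at z)) \<and> (\<forall>v. (\<lambda>z. f' z v) \<in> inner_rational)"
proof (induction rule: inner_rational.induct)
  case (const c)
  show ?case
    by (rule exI[of _ "\<lambda>z v. 0"]) (simp add: inner_rational.const)
next
  case (inner b)
  show ?case
    by (rule exI[of _ "\<lambda>z v. v \<bullet> b"])
      (auto intro!: bounded_linear_imp_has_derivative bounded_linear_inner_left inner_rational.const)
next
  case inverse_norm2
  let ?f' = "\<lambda>z v. inverse (z \<bullet> z) * ((- 2) * (z \<bullet> v)) * inverse (z \<bullet> z)"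
  have "((\<lambda>z. inverse (z \<bullet> z)) has_derivative ?f' z) (at z)" if "z \<in> U" for z
  proof (rule has_derivative_eq_rhs)
    show "((\<lambda>z. inverse (z \<bullet> z)) has_derivative
        (\<lambda>h. - (inverse (z \<bullet> z) * (z \<bullet> h + h \<bullet> z) * inverse (z \<bullet> z)))) (at z)"
      using that by (intro Deriv.has_derivative_inverse has_derivative_inner has_derivative_ident)
        (simp add: mem_U_iff)
  qed (auto simp: inner_commute algebra_simps)
  moreover have "(\<lambda>z. ?f' z v) \<in> inner_rational" for v
    by (intro inner_rational.intros)
  ultimately show ?case
    by (intro exI[of _ ?f']) blast
next
  case (add f g)
  then obtain f' g' where "\<forall>z\<in>U. (f has_derivative f' z) (at z)" "\<forall>v. (\<lambda>z. f' z v) \<in> inner_rational"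
    and "\<forall>z\<in>U. (g has_derivative g' z) (at z)" "\<forall>v. (\<lambda>z. g' z v) \<in> inner_rational"
    by blast
  then show ?case
    by (intro exI[of _ "\<lambda>z v. f' z v + g' z v"]) (auto intro: has_derivative_add inner_rational.add)
next
  case (mult f g)
  then obtain f' g' where f': "\<forall>z\<in>U. (f has_derivative f' z) (at z)"
    and f'_rat: "\<And>v. (\<lambda>z. f' z v) \<in> inner_rational"
    and g': "\<forall>z\<in>U. (g has_derivative g' z) (at z)"
    and g'_rat: "\<And>v. (\<lambda>z. g' z v) \<in> inner_rational"
    by blast
  show ?case
  proof (intro exI[of _ "\<lambda>z v. f z * g' z v + f' z v * g z"] conjI ballI allI)
    show "((\<lambda>z. f z * g z) has_derivative (\<lambda>v. f z * g' z v + f' z v * g z)) (at z)" if "z \<in> U" for z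
      using f' g' that by (simp add: has_derivative_mult)
    show "(\<lambda>z. f z * g' z v + f' z v * g z) \<in> inner_rational" for v
      by (intro inner_rational.add inner_rational.mult mult.hyps f'_rat g'_rat)
  qed
qed

lemma inner_rational_Ck_on: "f \<in> inner_rational \<Longrightarrow> Ck_on n U f"
proof (induction n arbitrary: f)
  case 0
  then obtain f' where "\<forall>z\<in>U. (f has_derivative f' z) (at z)"
    using inner_rational_has_derivative by blast
  then show ?case
    by (auto intro!: continuous_at_imp_continuous_on has_derivative_continuous)
next
  case (Suc n)
  then obtain f' where f': "\<forall>z\<in>U. (f has_derivative f' z) (at z)"
    and f'_rat: "\<forall>v. (\<lambda>z. f' z v) \<in> inner_rational"
    using inner_rational_has_derivative by blast
  have "f differentiable_on U"
    using f' open_U differentiable_on_eq_differentiable_at differentiable_def by blast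
  moreover have "Ck_on n U (\<lambda>x. frechet_derivative f (at x) v)" for v
    using Ck_on_cong[OF open_U _ Suc.IH[OF f'_rat[rule_format]]] f' frechet_derivative_at
    by metis
  ultimately show ?case
    by simp
qed

lemma inner_rational_smooth_on: "f \<in> inner_rational \<Longrightarrow> smooth_on U f"
  unfolding smooth_on_def by (blast intro: inner_rational_Ck_on)

definition dlog_norm :: "pt \<Rightarrow> pt \<Rightarrow> real" where
  "dlog_norm z v = (z \<bullet> v) / (z \<bullet> z)"

lemma has_derivative_dlog_norm:
  assumes "z \<in> U"
  shows "((\<lambda>y. dlog_norm y w) has_derivative
           (\<lambda>h. (h \<bullet> w) / (z \<bullet> z) - 2 * (z \<bullet> h) * (z \<bullet> w) / (z \<bullet> z)\<^sup>2)) (at z)"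
proof -
  have zz: "z \<bullet> z \<noteq> 0"
    using assms by (simp add: mem_U_iff)
  have "((\<lambda>y. (y \<bullet> w) / (y \<bullet> y)) has_derivative
      (\<lambda>h. - (z \<bullet> w) * (inverse (z \<bullet> z) * (z \<bullet> h + h \<bullet> z) * inverse (z \<bullet> z)) + (h \<bullet> w) / (z \<bullet> z)))
      (at z)"
    by (rule has_derivative_divide[OF bounded_linear_imp_has_derivative[OF bounded_linear_inner_left]
          has_derivative_inner[OF has_derivative_ident has_derivative_ident] zz])
  moreover have "- b * (inverse n * (a + a) * inverse n) + c / n = c / n - 2 * a * b / n\<^sup>2"
    if "n \<noteq> 0" for a b c n :: real
    using that by (simp add: field_simps power2_eq_square)
  ultimately show ?thesis
    using zz by (simp add: dlog_norm_def inner_commute)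
qed

lemma form1_dlog_norm: "form1 dlog_norm"
  unfolding form1_def
proof (intro conjI ballI allI)
  show "linear (dlog_norm z)" for z
    unfolding linear_iff dlog_norm_def by (simp add: inner_add_right add_divide_distrib)
  have "(\<lambda>z. (z \<bullet> v) * inverse (z \<bullet> z)) \<in> inner_rational" for v
    by (intro inner_rational.intros)
  then show "smooth_on U (\<lambda>z. dlog_norm z v)" for v
    by (simp add: dlog_norm_def divide_inverse inner_rational_smooth_on)
  show "dlog_norm (hopf_gen z) (2 *\<^sub>R v) = dlog_norm z v" if "z \<in> U" for z v
    using that by (simp add: dlog_norm_def hopf_gen_def mem_U_iff)
qed

lemma closed1_dlog_norm: "closed1 dlog_norm"
  unfolding closed1_def d1_def
proof (intro ballI allI)
  fix z v w :: pt
  assume "z \<in> U"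
  show "frechet_derivative (\<lambda>y. dlog_norm y w) (at z) v - frechet_derivative (\<lambda>y. dlog_norm y v) (at z) w = 0"
    unfolding frechet_derivative_at[OF has_derivative_dlog_norm[OF \<open>z \<in> U\<close>], symmetric]
    by (simp add: inner_commute ac_simps)
qed

lemma dlog_norm_primitive_along_ray:
  assumes f: "\<forall>z\<in>U. (f has_derivative dlog_norm z) (at z)" and z: "z \<in> U" and "t > 0"
  shows "f (t *\<^sub>R z) = f z + ln t"
proof -
  have "((\<lambda>s. f (s *\<^sub>R z) - ln s) has_field_derivative 0) (at s within {0<..})" if s: "s > 0" for s
  proof -
    have "s *\<^sub>R z \<in> U"
      using z s by (simp add: mem_U_iff)
    with f have "((\<lambda>s. f (s *\<^sub>R z)) has_derivative (\<lambda>h. dlog_norm (s *\<^sub>R z) (h *\<^sub>R z))) (at s)"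
      using has_derivative_compose[OF has_derivative_scaleR_left[OF has_derivative_ident, of z]] by blast
    then have "((\<lambda>s. f (s *\<^sub>R z)) has_field_derivative 1 / s) (at s)"
      unfolding has_field_derivative_def
      by (rule has_derivative_eq_rhs) (use z s in \<open>simp add: fun_eq_iff dlog_norm_def mem_U_iff\<close>)
    from DERIV_diff[OF this DERIV_ln_divide[OF s]] show ?thesis
      by (simp add: has_field_derivative_at_within)
  qed
  moreover have "convex {0::real<..}"
    by simp
  ultimately obtain c where "\<forall>s\<in>{0<..}. f (s *\<^sub>R z) - ln s = c"
    using has_field_derivative_zero_constant by blast
  from this[rule_format, of t] this[rule_format, of 1] \<open>t > 0\<close> show ?thesis
    by simp
qed

lemma dlog_norm_not_exact: "\<not> (\<exists>f. form0 f \<and> (\<forall>z\<in>U. d0 f z = dlog_norm z))"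
proof
  assume "\<exists>f. form0 f \<and> (\<forall>z\<in>U. d0 f z = dlog_norm z)"
  then obtain f where f0: "form0 f" and df: "\<forall>z\<in>U. d0 f z = dlog_norm z"
    by blast
  have smooth: "smooth_on U f"
    using f0 by (simp add: form0_def)
  have "(f has_derivative dlog_norm z) (at z)" if "z \<in> U" for z
  proof -
    have "frechet_derivative f (at z) = dlog_norm z"
      using df that unfolding d0_def by blast
    with smooth_on_imp_has_derivative[OF smooth open_U that] show ?thesis
      by simp
  qed
  moreover have z0: "(1, 0) \<in> U"
    by (simp add: mem_U_iff zero_prod_def)
  ultimately have "f (2 *\<^sub>R (1, 0)) = f (1, 0) + ln 2"
    by (intro dlog_norm_primitive_along_ray) auto
  moreover have "f (2 *\<^sub>R (1, 0)) = f (1, 0)"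
    using f0 z0 by (simp add: form0_def hopf_gen_def del: scaleR_Pair)
  ultimately show False
    by simp
qed

lemma H1dR_nontrivial: H1dR_nontrivial
  unfolding H1dR_nontrivial_def
  using form1_dlog_norm closed1_dlog_norm dlog_norm_not_exact by blast

lemma hopf_invariant_scale_powr:
  fixes \<psi> :: "pt \<Rightarrow> 'a"
  assumes inv: "\<forall>z\<in>U. \<psi> (2 *\<^sub>R z) = \<psi> z" and z: "z \<in> U"
  shows "\<psi> ((2 powr of_int k) *\<^sub>R z) = \<psi> z"
proof (induction k rule: int_induct[where k = 0])
  case base
  show ?case
    by simp
next
  case (step1 i)
  have "(2 powr of_int (i + 1)) *\<^sub>R z = 2 *\<^sub>R ((2 powr of_int i) *\<^sub>R z)"
    by (simp add: powr_add)
  moreover have "(2 powr of_int i) *\<^sub>R z \<in> U"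
    using z by (simp add: mem_U_iff)
  ultimately show ?case
    using inv step1.IH by metis
next
  case (step2 i)
  have "2 *\<^sub>R ((2 powr of_int (i - 1)) *\<^sub>R z) = (2 powr of_int i) *\<^sub>R z"
    by (simp add: powr_diff)
  moreover have "(2 powr of_int (i - 1)) *\<^sub>R z \<in> U"
    using z by (simp add: mem_U_iff)
  ultimately show ?case
    using inv step2.IH by metis
qed

lemma hopf_invariant_bounded:
  fixes \<psi> :: "pt \<Rightarrow> real"
  assumes cont: "continuous_on U \<psi>" and inv: "\<forall>z\<in>U. \<psi> (2 *\<^sub>R z) = \<psi> z"
  shows "bounded (\<psi> ` U)"
proof -
  \<comment> \<open>every orbit of \<open>z \<mapsto> 2 z\<close> meets the compact annulus \<open>A\<close>\<close>
  define A :: "pt set" where "A = cball 0 2 \<inter> - ball 0 1"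
  have "compact A"
    unfolding A_def by (intro compact_Int_closed compact_cball closed_Compl open_ball)
  moreover have "A \<subseteq> U"
    by (auto simp: A_def mem_U_iff)
  ultimately have "bounded (\<psi> ` A)"
    using cont by (meson compact_continuous_image compact_imp_bounded continuous_on_subset)
  moreover have "\<psi> ` U \<subseteq> \<psi> ` A"
  proof
    fix y assume "y \<in> \<psi> ` U"
    then obtain z where z: "z \<in> U" and y: "y = \<psi> z"
      by blast
    define L where "L = log 2 (norm z)"
    define k where "k = - \<lfloor>L\<rfloor>"
    have "norm ((2 powr of_int k) *\<^sub>R z) = 2 powr (L + of_int k)"
      using z by (simp add: L_def mem_U_iff powr_add)
    moreover have "1 \<le> 2 powr (L + of_int k)"
      unfolding k_def by (intro ge_one_powr_ge_zero) linarith+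
    moreover have "2 powr (L + of_int k) \<le> 2 powr 1"
      unfolding k_def by (intro powr_mono) linarith+
    ultimately have "(2 powr of_int k) *\<^sub>R z \<in> A"
      unfolding A_def by simp
    moreover have "\<psi> ((2 powr of_int k) *\<^sub>R z) = y"
      using hopf_invariant_scale_powr[OF inv z] y by simp
    ultimately show "y \<in> \<psi> ` A"
      by (metis image_eqI)
  qed
  ultimately show ?thesis
    by (rule bounded_subset)
qed

lemma form1_scale_half:
  assumes "form1 \<alpha>" "z \<in> U"
  shows "\<alpha> (2 *\<^sub>R z) v = \<alpha> z v / 2"
proof -
  have "2 *\<^sub>R z \<in> U"
    using assms(2) by (simp add: mem_U_iff)
  then have "\<alpha> (2 *\<^sub>R z) (2 *\<^sub>R v) = 2 * \<alpha> (2 *\<^sub>R z) v"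
    using assms(1) by (simp add: form1_def linear_scale)
  moreover have "\<alpha> (2 *\<^sub>R z) (2 *\<^sub>R v) = \<alpha> z v"
    using assms unfolding form1_def hopf_gen_def by blast
  ultimately show ?thesis
    by simp
qed

lemma form1_norm_decay:
  assumes "form1 \<alpha>"
  obtains M where "\<And>z. z \<in> U \<Longrightarrow> \<bar>\<alpha> z v\<bar> * norm z \<le> M"
proof -
  have "continuous_on U (\<lambda>z. \<alpha> z v)"
    using assms smooth_on_imp_continuous_on unfolding form1_def by blast
  then have "continuous_on U (\<lambda>z. \<bar>\<alpha> z v\<bar> * norm z)"
    by (intro continuous_intros)
  moreover have "\<bar>\<alpha> (2 *\<^sub>R z) v\<bar> * norm (2 *\<^sub>R z) = \<bar>\<alpha> z v\<bar> * norm z" if "z \<in> U" for z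
    by (simp only: form1_scale_half[OF assms that]) simp
  ultimately have "bounded ((\<lambda>z. \<bar>\<alpha> z v\<bar> * norm z) ` U)"
    by (intro hopf_invariant_bounded) auto
  then show ?thesis
    using that by (auto simp: bounded_iff)
qed

lemma form1_tendsto_zero:
  assumes "form1 \<alpha>" and E: "filterlim E at_infinity F" "\<forall>\<^sub>F x in F. E x \<in> U"
  shows "((\<lambda>x. \<alpha> (E x) v) \<longlongrightarrow> 0) F"
proof -
  obtain M where M: "\<And>z. z \<in> U \<Longrightarrow> \<bar>\<alpha> z v\<bar> * norm z \<le> M"
    using form1_norm_decay[OF assms(1)] by blast
  have "\<forall>\<^sub>F x in F. norm (\<alpha> (E x) v) \<le> M / norm (E x)"
    using E(2) by eventually_elim (use M in \<open>simp add: mem_U_iff pos_le_divide_eq\<close>)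
  moreover have "((\<lambda>x. M / norm (E x)) \<longlongrightarrow> 0) F"
    using E(1) by (intro tendsto_divide_0[OF tendsto_const] filterlim_at_top_imp_at_infinity
        filterlim_at_infinity_imp_norm_at_top)
  ultimately show ?thesis
    by (rule Lim_null_comparison)
qed

definition cscale :: "complex \<Rightarrow> pt \<Rightarrow> pt" where
  "cscale c v = (c * fst v, c * snd v)"

lemma cscale_eq_real_combination: "cscale c v = Re c *\<^sub>R v + Im c *\<^sub>R Jc v"
  by (simp add: cscale_def Jc_def scaleR_conv_of_real complex_eq_iff prod_eq_iff algebra_simps)

lemma norm_cscale: "norm (cscale c v) = cmod c * norm v"
proof -
  have "norm (cscale c v) = sqrt ((cmod c)\<^sup>2 * ((cmod (fst v))\<^sup>2 + (cmod (snd v))\<^sup>2))"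
    by (simp add: cscale_def norm_Pair norm_mult power_mult_distrib algebra_simps)
  also have "\<dots> = cmod c * norm v"
    by (simp add: real_sqrt_mult norm_prod_def)
  finally show ?thesis .
qed

lemma has_derivative_complex_line:
  "((\<lambda>c. z + cscale c v) has_derivative (\<lambda>h. cscale h v)) (at c)"
  unfolding cscale_def
  by (auto intro!: derivative_eq_intros)

lemma complex_line_at_infinity:
  assumes "v \<noteq> 0"
  shows "filterlim (\<lambda>c. z + cscale c v) at_infinity at_infinity"
  unfolding filterlim_at_infinity[OF order_refl]
proof (intro allI impI)
  fix r :: real
  assume "r > 0"
  have "r \<le> norm (z + cscale c v)" if "(r + norm z) / norm v \<le> cmod c" for c
  proof -
    have "r + norm z \<le> cmod c * norm v"
      using that assms by (simp add: pos_divide_le_eq)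
    also have "\<dots> \<le> norm (z + cscale c v) + norm z"
      using norm_triangle_ineq2[of "cscale c v" "- z"] by (simp add: norm_cscale norm_minus_commute add.commute)
    finally show ?thesis
      by simp
  qed
  then show "\<forall>\<^sub>F c in at_infinity. r \<le> norm (z + cscale c v)"
    unfolding eventually_at_infinity by blast
qed

lemma form1_frechet_derivative_uminus:
  assumes "form1 \<alpha>" "z \<in> U"
  shows "frechet_derivative (\<lambda>y. \<alpha> y (- v)) (at z) = (\<lambda>h. - frechet_derivative (\<lambda>y. \<alpha> y v) (at z) h)"
proof -
  have "smooth_on U (\<lambda>y. \<alpha> y v)"
    using assms(1) unfolding form1_def by blast
  then have "((\<lambda>y. - \<alpha> y v) has_derivative (\<lambda>h. - frechet_derivative (\<lambda>y. \<alpha> y v) (at z) h)) (at z)"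
    by (intro has_derivative_minus smooth_on_imp_has_derivative[OF _ open_U assms(2)])
  then have "((\<lambda>y. \<alpha> y (- v)) has_derivative (\<lambda>h. - frechet_derivative (\<lambda>y. \<alpha> y v) (at z) h)) (at z)"
  proof (rule has_derivative_transform_within_open[OF _ open_U assms(2)])
    show "- \<alpha> y v = \<alpha> y (- v)" if "y \<in> U" for y
      using assms(1) that unfolding form1_def by (simp add: linear_neg)
  qed
  then show ?thesis
    by (rule frechet_derivative_at[symmetric])
qed

text \<open>For closed \<open>\<alpha>\<close> we have \<open>L\<^sub>J \<alpha> = - d(\<alpha> \<circ> J)\<close>, so \<open>\<alpha> \<circ> J\<close> is closed too; on the complex
  line spanned by \<open>e\<close> the two closedness conditions are the Cauchy--Riemann equations.\<close>

lemma closed_kerLJ1_cauchy_riemann: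
  assumes K: "\<alpha> \<in> kerLJ1" and C: "closed1 \<alpha>" and z: "z \<in> U"
  defines "D v \<equiv> frechet_derivative (\<lambda>y. \<alpha> y v) (at z)"
  shows "D (Jc e) e = D e (Jc e)" and "D (Jc e) (Jc e) = - D e e"
proof -
  have d1_zero: "d1 \<alpha> z v w = 0" for v w
    using C z unfolding closed1_def by blast
  from d1_zero[of e "Jc e"] show "D (Jc e) e = D e (Jc e)"
    unfolding d1_def D_def by simp
  have "LJ1 \<alpha> z e (Jc e) = 0"
    using K z unfolding kerLJ1_def by blast
  then have "d1 (iJ1 \<alpha>) z e (Jc e) = 0"
    unfolding LJ1_def iJ2_def d1_zero by simp
  moreover have "Jc (Jc e) = - e"
    by (cases e) (simp add: Jc_def)
  ultimately have "frechet_derivative (\<lambda>y. \<alpha> y (- e)) (at z) e - D (Jc e) (Jc e) = 0"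
    unfolding d1_def iJ1_def D_def by simp
  then show "D (Jc e) (Jc e) = - D e e"
    using form1_frechet_derivative_uminus[of \<alpha> z e] K z unfolding D_def kerLJ1_def by simp
qed

lemma closed_kerLJ1_holomorphic_on_line:
  assumes K: "\<alpha> \<in> kerLJ1" and C: "closed1 \<alpha>" and line: "\<forall>c. z + cscale c e \<in> U"
  shows "(\<lambda>c. complex_of_real (\<alpha> (z + cscale c e) e) - \<i> * complex_of_real (\<alpha> (z + cscale c e) (Jc e)))
           holomorphic_on UNIV"
proof -
  let ?E = "\<lambda>c. z + cscale c e"
  let ?G = "\<lambda>c. complex_of_real (\<alpha> (?E c) e) - \<i> * complex_of_real (\<alpha> (?E c) (Jc e))"
  have "?G field_differentiable (at c)" for c
  proof -
    define D where "D v = frechet_derivative (\<lambda>y. \<alpha> y v) (at (?E c))" for v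
    have smooth: "smooth_on U (\<lambda>y. \<alpha> y v)" for v
      using K unfolding kerLJ1_def form1_def by blast
    have D: "((\<lambda>y. \<alpha> y v) has_derivative D v) (at (?E c))" for v
      unfolding D_def by (rule smooth_on_imp_has_derivative[OF smooth open_U line[rule_format]])
    have "((\<lambda>c. \<alpha> (?E c) v) has_derivative (\<lambda>h. D v (cscale h e))) (at c)" for v
      using has_derivative_compose[OF has_derivative_complex_line D] .
    moreover have "D v (cscale h e) = Re h * D v e + Im h * D v (Jc e)" for v h
      using has_derivative_linear[OF D[of v]]
      by (simp add: cscale_eq_real_combination linear_add linear_scale)
    ultimately have "((\<lambda>c. \<alpha> (?E c) v) has_derivative (\<lambda>h. Re h * D v e + Im h * D v (Jc e))) (at c)" for v
      by simp
    then have G': "(?G has_derivative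
        (\<lambda>h. of_real (Re h * D e e + Im h * D e (Jc e)) - \<i> * of_real (Re h * D (Jc e) e + Im h * D (Jc e) (Jc e))))
        (at c)"
      by (intro has_derivative_diff has_derivative_mult_right bounded_linear.has_derivative[OF bounded_linear_of_real])
    have cauchy_riemann: "D (Jc e) e = D e (Jc e)" "D (Jc e) (Jc e) = - D e e"
      using closed_kerLJ1_cauchy_riemann[OF K C line[rule_format]] unfolding D_def by simp_all
    have "(?G has_field_derivative (of_real (D e e) - \<i> * of_real (D (Jc e) e))) (at c)"
      unfolding has_field_derivative_def
      by (rule has_derivative_eq_rhs[OF G']) (simp add: fun_eq_iff complex_eq_iff algebra_simps cauchy_riemann)
    then show ?thesis
      unfolding field_differentiable_def by blast
  qed
  then show ?thesis
    by (simp add: holomorphic_on_def)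
qed

lemma closed_kerLJ1_vanishes_on_line:
  assumes K: "\<alpha> \<in> kerLJ1" and C: "closed1 \<alpha>" and "e \<noteq> 0" and line: "\<forall>c. z + cscale c e \<noteq> 0"
  shows "\<alpha> z e = 0" and "\<alpha> z (Jc e) = 0"
proof -
  let ?E = "\<lambda>c. z + cscale c e"
  have E_U: "\<forall>c. ?E c \<in> U"
    using line by (simp add: mem_U_iff)
  have form1: "form1 \<alpha>"
    using K by (simp add: kerLJ1_def)
  have "((\<lambda>c. \<alpha> (?E c) e) \<longlongrightarrow> 0) at_infinity" "((\<lambda>c. \<alpha> (?E c) (Jc e)) \<longlongrightarrow> 0) at_infinity"
    using form1_tendsto_zero[OF form1 complex_line_at_infinity[OF \<open>e \<noteq> 0\<close>]] E_U by simp_all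
  then have "((\<lambda>c. complex_of_real (\<alpha> (?E c) e) - \<i> * complex_of_real (\<alpha> (?E c) (Jc e)))
      \<longlongrightarrow> of_real 0 - \<i> * of_real 0) at_infinity"
    by (intro tendsto_intros)
  then have "((\<lambda>c. complex_of_real (\<alpha> (?E c) e) - \<i> * complex_of_real (\<alpha> (?E c) (Jc e))) \<longlongrightarrow> 0) at_infinity"
    by simp
  with closed_kerLJ1_holomorphic_on_line[OF K C E_U]
  have "complex_of_real (\<alpha> (?E 0) e) - \<i> * complex_of_real (\<alpha> (?E 0) (Jc e)) = 0"
    by (rule Liouville_weak_0)
  moreover have "?E 0 = z"
    by (simp add: cscale_def flip: zero_prod_def)
  ultimately show "\<alpha> z e = 0" "\<alpha> z (Jc e) = 0"
    by (simp_all add: complex_eq_iff)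
qed

lemma linear_cscale_eq_0:
  assumes "linear f" "f e = 0" "f (Jc e) = 0"
  shows "f (cscale c e) = 0"
  using assms by (simp add: cscale_eq_real_combination linear_add linear_scale)

lemma closed_kerLJ1_eq_0:
  assumes K: "\<alpha> \<in> kerLJ1" and C: "closed1 \<alpha>" and z: "z \<in> U"
  shows "\<alpha> z v = 0"
proof -
  have lin: "linear (\<alpha> z)"
    using K z by (simp add: kerLJ1_def form1_def)
  have along: "\<alpha> z (cscale c e) = 0" if "e \<noteq> 0" "\<forall>c. z + cscale c e \<noteq> 0" for c e
    using closed_kerLJ1_vanishes_on_line[OF K C that] by (intro linear_cscale_eq_0[OF lin])
  obtain z1 z2 where z12: "z = (z1, z2)"
    by (cases z)
  have nz: "z1 \<noteq> 0 \<or> z2 \<noteq> 0"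
    using z by (simp add: z12 mem_U_iff zero_prod_def)
  have line_10: "\<forall>c. z + cscale c (1, 0) \<noteq> 0" if "z2 \<noteq> 0"
    using that by (simp add: z12 cscale_def zero_prod_def)
  have line_01: "\<forall>c. z + cscale c (0, 1) \<noteq> 0" if "z1 \<noteq> 0"
    using that by (simp add: z12 cscale_def zero_prod_def)
  have line_11: "\<forall>c. z + cscale c (1, 1) \<noteq> 0" if "z1 = 0 \<or> z2 = 0"
    using that nz by (auto simp: z12 cscale_def zero_prod_def)
  have "\<alpha> z (c, 0) = 0" for c
  proof (cases "z2 = 0")
    case False
    then show ?thesis
      using along[OF _ line_10] by (simp add: cscale_def zero_prod_def)
  next
    case True
    then have "\<alpha> z (cscale c (1, 1) - cscale c (0, 1)) = 0"
      using along[OF _ line_11] along[OF _ line_01] nz by (simp add: linear_diff[OF lin] zero_prod_def)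
    then show ?thesis
      by (simp add: cscale_def zero_prod_def)
  qed
  moreover have "\<alpha> z (0, c) = 0" for c
  proof (cases "z1 = 0")
    case False
    then show ?thesis
      using along[OF _ line_01] by (simp add: cscale_def zero_prod_def)
  next
    case True
    then have "\<alpha> z (cscale c (1, 1) - cscale c (1, 0)) = 0"
      using along[OF _ line_11] along[OF _ line_10] nz by (simp add: linear_diff[OF lin] zero_prod_def)
    then show ?thesis
      by (simp add: cscale_def zero_prod_def)
  qed
  ultimately show ?thesis
    using linear_add[OF lin, of "(fst v, 0)" "(0, snd v)"] by simp
qed

lemma zero_in_kerLJ0: "(\<lambda>_. 0) \<in> kerLJ0"
proof -
  have "frechet_derivative (\<lambda>_. 0 :: real) (at z) = (\<lambda>_. 0)" for z :: pt
    by (rule frechet_derivative_at[OF has_derivative_const, symmetric])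
  then show ?thesis
    unfolding kerLJ0_def form0_def LJ0_def iJ1_def d0_def
    by (simp add: inner_rational_smooth_on inner_rational.const)
qed

lemma H1J_trivial: H1J_trivial
  unfolding H1J_trivial_def
proof (intro ballI impI)
  fix \<alpha>
  assume "\<alpha> \<in> kerLJ1" "closed1 \<alpha>"
  then have "\<forall>z\<in>U. d0 (\<lambda>_. 0) z = \<alpha> z"
    using zero_in_kerLJ0 closed_kerLJ1_eq_0
    by (simp add: fun_eq_iff d0_def kerLJ0_def LJ0_def iJ1_def)
  then show "\<exists>f\<in>kerLJ0. \<forall>z\<in>U. d0 f z = \<alpha> z"
    using zero_in_kerLJ0 by blast
qed

theorem mainTheorem19:
  shows "H1J_trivial \<and> H1dR_nontrivial"
  using H1J_trivial H1dR_nontrivial by blast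

end
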